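(* Let $k\ge 1$, let $d=k+1$, and let $A$ be a $d\times d$ matrix with entries in $\{0,1\}$ which is primitive (i.e. $A^p$ has all entries positive for some integer $p\ge1$). Then $A\in P^*(k)$ if and only if $A$ has a positive row, i.e. there is $i_0\in D$ with $A(i_0,j)=1$ for all $j\in D$.
   Context: Let $K=\{1,\dots,k\}$ and $D=\{1,\dots,d\}$. The $k$-tree $\tau$ is the set $K^*$ of all finite words over $K$; the empty word $\epsilon$ is the root, and for a word $x$ and $g\in K$ the word $xg$ is a child of $x$. $L_n$ denotes the set of words of length exactly $n$. For a $d\times d$ $0,1$ matrix $A$, let $X_A=\{\lambda\in D^{\tau}: A(\lambda(x),\lambda(xg))>0 \text{ for all } x\in\tau,\ g\in K\}$. For $i\in D$ and $\mathcal T\subseteq\tau$, the arrival set is $\mathcal A(i,\epsilon,\mathcal T)=\{\lambda|_{\mathcal T}:\lambda\in X_A,\ \lambda(\epsilon)=i\}$. The matrix $A$ is in $P^*(k,n)$ if $\mathcal A(i,\epsilon,L_n)=D^{L_n}$ for every $i\in D$ (i.e. every labeling of $L_n$ by $D$ is achievable from every root symbol), and $P^*(k)=\bigcup_{n\ge0}P^*(k,n)$. *)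

theory Defs
  imports "HOL-Library.FuncSet"
begin

text \<open>Alphabet K = {1..k}, symbols D = {1..d}. Words are lists over K;
  the word x g (child of x) is x @ [g]; the root is []. A d x d matrix is a
  function nat => nat => nat, only its entries on D x D being relevant.\<close>

definition ktree :: "nat \<Rightarrow> nat list set" where
  "ktree k = {x. set x \<subseteq> {1..k}}"

definition level :: "nat \<Rightarrow> nat \<Rightarrow> nat list set" where
  "level k n = {x \<in> ktree k. length x = n}"

definition XA :: "nat \<Rightarrow> nat \<Rightarrow> (nat \<Rightarrow> nat \<Rightarrow> nat) \<Rightarrow> (nat list \<Rightarrow> nat) set" where
  "XA k d A = {lam. (\<forall>x\<in>ktree k. lam x \<in> {1..d}) \<and>
                    (\<forall>x\<in>ktree k. \<forall>g\<in>{1..k}. A (lam x) (lam (x @ [g])) > 0)}"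

definition arrival ::
  "nat \<Rightarrow> nat \<Rightarrow> (nat \<Rightarrow> nat \<Rightarrow> nat) \<Rightarrow> nat \<Rightarrow> nat list set \<Rightarrow> (nat list \<Rightarrow> nat) set" where
  "arrival k d A i T = {restrict lam T | lam. lam \<in> XA k d A \<and> lam [] = i}"

definition in_Pstar_n :: "nat \<Rightarrow> nat \<Rightarrow> (nat \<Rightarrow> nat \<Rightarrow> nat) \<Rightarrow> nat \<Rightarrow> bool" where
  "in_Pstar_n k d A n \<longleftrightarrow>
     (\<forall>i\<in>{1..d}. arrival k d A i (level k n) = (level k n \<rightarrow>\<^sub>E {1..d}))"

definition in_Pstar :: "nat \<Rightarrow> nat \<Rightarrow> (nat \<Rightarrow> nat \<Rightarrow> nat) \<Rightarrow> bool" where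
  "in_Pstar k d A \<longleftrightarrow> (\<exists>n. in_Pstar_n k d A n)"

fun matpow :: "nat \<Rightarrow> (nat \<Rightarrow> nat \<Rightarrow> nat) \<Rightarrow> nat \<Rightarrow> nat \<Rightarrow> nat \<Rightarrow> nat" where
  "matpow d A 0 = (\<lambda>i j. if i = j then 1 else 0)"
| "matpow d A (Suc p) = (\<lambda>i j. \<Sum>l\<in>{1..d}. matpow d A p i l * A l j)"

definition primitive :: "nat \<Rightarrow> (nat \<Rightarrow> nat \<Rightarrow> nat) \<Rightarrow> bool" where
  "primitive d A \<longleftrightarrow> (\<exists>p\<ge>1. \<forall>i\<in>{1..d}. \<forall>j\<in>{1..d}. matpow d A p i j > 0)"

end

theory Submission
  imports Defs
begin

text \<open>If row \<open>i\<^sub>0\<close> is positive and \<open>A\<^sup>p > 0\<close>, every labelling of \<open>L\<^sub>p\<^sub>+\<^sub>1\<close> is reached from every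
  root symbol: along each branch walk in \<open>p\<close> steps to \<open>i\<^sub>0\<close>, let \<open>i\<^sub>0\<close> emit the prescribed labels,
  and continue below by any successor.

  Conversely, let every row have a zero. A vertex has only \<open>k = d - 1\<close> children, so
  if they carry the \<open>k\<close> labels \<open>D - {m}\<close>, the label \<open>j\<close>
  of the vertex has \<open>A(j,l) > 0\<close> for all \<open>l \<noteq> m\<close>; as row
  \<open>j\<close> has a zero, this determines \<open>m\<close> from \<open>j\<close>. If some
  \<open>m\<close> arises from no \<open>j\<close>, giving every sibling group the labels
  \<open>D - {m}\<close> is unreachable. Otherwise \<open>j \<mapsto> m\<close> is a bijection
  \<open>h\<close> of \<open>D\<close>, and labelling the children of every \<open>c\<close> by
  \<open>D - {h c}\<close> below a root \<open>r\<close> forces, level by level upwards, the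
  root symbol \<open>r\<close>.\<close>

lemma ktree_snoc: "x \<in> ktree k \<Longrightarrow> g \<in> {1..k} \<Longrightarrow> x @ [g] \<in> ktree k"
  by (auto simp: ktree_def)

lemma level_0: "level k 0 = {[]}"
  by (auto simp: level_def ktree_def)

lemma in_Pstar_nD:
  assumes "in_Pstar_n k d A n" "i \<in> {1..d}" "ell \<in> level k n \<rightarrow>\<^sub>E {1..d}"
  obtains lam where "lam \<in> XA k d A" "lam [] = i" "restrict lam (level k n) = ell"
proof -
  have "ell \<in> arrival k d A i (level k n)"
    using assms unfolding in_Pstar_n_def by blast
  then show thesis
    using that unfolding arrival_def by blast
qed

lemma in_Pstar_nI:
  assumes "\<And>i ell. i \<in> {1..d} \<Longrightarrow> ell \<in> level k n \<rightarrow>\<^sub>E {1..d} \<Longrightarrow>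
    \<exists>lam\<in>XA k d A. lam [] = i \<and> restrict lam (level k n) = ell"
  shows "in_Pstar_n k d A n"
proof -
  have "f \<in> level k n \<rightarrow>\<^sub>E {1..d}" if "f \<in> arrival k d A i (level k n)" for f i
  proof -
    from that obtain lam where "f = restrict lam (level k n)" "lam \<in> XA k d A"
      unfolding arrival_def by blast
    then show ?thesis
      by (auto simp: XA_def level_def)
  qed
  then show ?thesis
    using assms unfolding in_Pstar_n_def arrival_def by blast
qed

lemma not_in_Pstar_n_0:
  assumes "2 \<le> d"
  shows "\<not> in_Pstar_n k d A 0"
proof
  assume "in_Pstar_n k d A 0"
  moreover have "(2::nat) \<in> {1..d}" and "(\<lambda>x\<in>{[]}. 1) \<in> level k 0 \<rightarrow>\<^sub>E {1..d}"
    using assms by (auto simp: level_0)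
  ultimately obtain lam :: "nat list \<Rightarrow> nat"
    where root: "lam [] = 2" and lev: "restrict lam (level k 0) = (\<lambda>x\<in>{[]}. 1)"
    by (rule in_Pstar_nD)
  show False
    using fun_cong[OF lev, of "[]"] root by (simp add: level_0)
qed


subsection \<open>Sufficiency of a positive row\<close>

definition walk :: "(nat \<Rightarrow> nat \<Rightarrow> nat) \<Rightarrow> nat \<Rightarrow> nat \<Rightarrow> (nat \<Rightarrow> nat) \<Rightarrow> bool" where
  "walk A d p v \<longleftrightarrow> (\<forall>m\<le>p. v m \<in> {1..d}) \<and> (\<forall>m<p. A (v m) (v (Suc m)) > 0)"

lemma walk_if_matpow_pos:
  assumes "i \<in> {1..d}"
  shows "j \<in> {1..d} \<Longrightarrow> matpow d A p i j > 0 \<Longrightarrow> \<exists>v. walk A d p v \<and> v 0 = i \<and> v p = j"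
proof (induction p arbitrary: j)
  case 0
  then show ?case
    using assms by (intro exI[of _ "\<lambda>_. i"]) (auto simp: walk_def split: if_splits)
next
  case (Suc p)
  then have "(\<Sum>l\<in>{1..d}. matpow d A p i l * A l j) > 0"
    by simp
  then obtain l where l: "l \<in> {1..d}" "matpow d A p i l > 0" "A l j > 0"
    by (metis (no_types, lifting) mult_eq_0_iff not_gr0 sum.neutral)
  then obtain v where v: "walk A d p v" "v 0 = i" "v p = l"
    using Suc.IH by blast
  have "walk A d (Suc p) (v(Suc p := j))"
    unfolding walk_def
  proof (intro conjI allI impI)
    fix m
    show "m \<le> Suc p \<Longrightarrow> (v(Suc p := j)) m \<in> {1..d}"
      using v(1) Suc.prems(1) by (cases "m = Suc p") (auto simp: walk_def)
    show "m < Suc p \<Longrightarrow> A ((v(Suc p := j)) m) ((v(Suc p := j)) (Suc m)) > 0"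
      using v l by (cases "m = p") (auto simp: walk_def)
  qed
  moreover have "(v(Suc p := j)) 0 = i" "(v(Suc p := j)) (Suc p) = j"
    using v(2) by simp_all
  ultimately show ?case
    by blast
qed

lemma primitive_successor:
  assumes "primitive d A" "j \<in> {1..d}"
  shows "\<exists>l\<in>{1..d}. A j l > 0"
proof -
  obtain p where "p \<ge> 1" "matpow d A p j j > 0"
    using assms unfolding primitive_def by blast
  then obtain v where "walk A d p v" "v 0 = j"
    using walk_if_matpow_pos[OF assms(2) assms(2)] by blast
  then show ?thesis
    using \<open>p \<ge> 1\<close> unfolding walk_def by (metis One_nat_def less_eq_Suc_le)
qed

lemma funpow_closed: "(\<And>j. j \<in> S \<Longrightarrow> s j \<in> S) \<Longrightarrow> a \<in> S \<Longrightarrow> (s ^^ n) a \<in> S"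
  by (induction n) auto

lemma labelling_through_positive_row:
  assumes v: "walk A d p v" "v 0 = i" "v p = i0"
    and pos: "\<forall>j\<in>{1..d}. A i0 j > 0"
    and s: "\<forall>j\<in>{1..d}. s j \<in> {1..d} \<and> A j (s j) > 0"
    and ell: "ell \<in> level k (Suc p) \<rightarrow>\<^sub>E {1..d}"
  defines "lam \<equiv> \<lambda>x. if length x \<le> p then v (length x)
    else (s ^^ (length x - Suc p)) (ell (take (Suc p) x))"
  shows "lam \<in> XA k d A" and "lam [] = i" and "restrict lam (level k (Suc p)) = ell"
proof -
  have lam_range: "lam x \<in> {1..d}" if x: "x \<in> ktree k" for x
  proof (cases "length x \<le> p")
    case False
    then have "take (Suc p) x \<in> level k (Suc p)"
      using x set_take_subset[of "Suc p" x] by (auto simp: level_def ktree_def)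
    then have "ell (take (Suc p) x) \<in> {1..d}"
      using ell by blast
    then show ?thesis
      using False s funpow_closed[of "{1..d}" s] by (auto simp: lam_def)
  qed (use v(1) in \<open>simp add: lam_def walk_def\<close>)
  have "A (lam x) (lam (x @ [g])) > 0" if x: "x \<in> ktree k" and g: "g \<in> {1..k}" for x g
  proof (cases "length x" p rule: linorder_cases)
    case less
    then show ?thesis using v(1) by (simp add: lam_def walk_def)
  next
    case equal
    then show ?thesis
      using pos v(3) lam_range[OF ktree_snoc[OF x g]] by (simp add: lam_def)
  next
    case greater
    then obtain q where q: "length x = Suc p + q"
      using less_imp_Suc_add by blast
    then have "lam (x @ [g]) = s (lam x)"
      by (simp add: lam_def)
    then show ?thesis
      using s lam_range[OF x] by simp
  qed
  with lam_range show "lam \<in> XA k d A"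
    unfolding XA_def by blast
  show "lam [] = i"
    using v(2) by (simp add: lam_def)
  have "restrict lam (level k (Suc p)) = restrict ell (level k (Suc p))"
    by (rule restrict_ext) (simp add: lam_def level_def)
  then show "restrict lam (level k (Suc p)) = ell"
    using ell by simp
qed

lemma in_Pstar_n_Suc_if_positive_row:
  assumes "i0 \<in> {1..d}" "\<forall>j\<in>{1..d}. A i0 j > 0"
    and walks: "\<forall>i\<in>{1..d}. matpow d A p i i0 > 0"
    and succ: "\<forall>j\<in>{1..d}. \<exists>l\<in>{1..d}. A j l > 0"
  shows "in_Pstar_n k d A (Suc p)"
proof (rule in_Pstar_nI)
  fix i ell assume i: "i \<in> {1..d}" and ell: "ell \<in> level k (Suc p) \<rightarrow>\<^sub>E {1..d}"
  obtain s where s: "\<forall>j\<in>{1..d}. s j \<in> {1..d} \<and> A j (s j) > 0"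
    using bchoice[of "{1..d}" "\<lambda>j l. l \<in> {1..d} \<and> A j l > 0"] succ by blast
  obtain v where "walk A d p v" "v 0 = i" "v p = i0"
    using walk_if_matpow_pos[OF i assms(1)] walks i by blast
  note lam = labelling_through_positive_row[OF this assms(2) s ell]
  show "\<exists>lam\<in>XA k d A. lam [] = i \<and> restrict lam (level k (Suc p)) = ell"
    using lam(2,3) by (intro bexI[OF _ lam(1)]) simp
qed


subsection \<open>Necessity of a positive row\<close>

definition skip :: "nat \<Rightarrow> nat \<Rightarrow> nat" where
  "skip m g = (if g < m then g else Suc g)"

lemma skip_image:
  assumes "m \<in> {1..k + 1}"
  shows "skip m ` {1..k} = {1..k + 1} - {m}"
proof
  show "skip m ` {1..k} \<subseteq> {1..k + 1} - {m}"
    by (auto simp: skip_def)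
  show "{1..k + 1} - {m} \<subseteq> skip m ` {1..k}"
  proof
    fix l assume l: "l \<in> {1..k + 1} - {m}"
    show "l \<in> skip m ` {1..k}"
    proof (cases "l < m")
      case True
      then show ?thesis using l assms by (intro image_eqI[of _ _ l]) (auto simp: skip_def)
    next
      case False
      then show ?thesis using l assms by (intro image_eqI[of _ _ "l - 1"]) (auto simp: skip_def)
    qed
  qed
qed

lemma skip_range: "g \<in> {1..k} \<Longrightarrow> skip m g \<in> {1..k + 1}"
  by (auto simp: skip_def)

definition row_positive_except :: "(nat \<Rightarrow> nat \<Rightarrow> nat) \<Rightarrow> nat \<Rightarrow> nat \<Rightarrow> nat \<Rightarrow> bool" where
  "row_positive_except A d j m \<longleftrightarrow> (\<forall>l\<in>{1..d} - {m}. A j l > 0)"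

lemma row_positive_except_unique:
  assumes "\<exists>l\<in>{1..d}. A j l = 0"
    and "row_positive_except A d j m" "row_positive_except A d j m'"
  shows "m = m'"
proof -
  obtain l where "l \<in> {1..d}" "A j l = 0"
    using assms(1) by blast
  then have "l = m" and "l = m'"
    using assms(2,3) unfolding row_positive_except_def by force+
  then show ?thesis
    by simp
qed

lemma row_positive_except_parent:
  assumes "d = k + 1" "lam \<in> XA k d A" "x \<in> ktree k" "m \<in> {1..d}"
    and children: "\<And>g. g \<in> {1..k} \<Longrightarrow> lam (x @ [g]) = skip m g"
  shows "row_positive_except A d (lam x) m"
  unfolding row_positive_except_def
proof
  fix l assume "l \<in> {1..d} - {m}"
  then obtain g where g: "g \<in> {1..k}" "l = skip m g"
    using skip_image[of m k] assms(1,4) by blast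
  then have "A (lam x) (lam (x @ [g])) > 0"
    using assms(2,3) by (auto simp: XA_def)
  then show "A (lam x) l > 0"
    using children g by simp
qed

lemma not_in_Pstar_n_Suc_if_complement_unrealised:
  assumes "k \<ge> 1" "d = k + 1" "m \<in> {1..d}"
    and unrealised: "\<forall>j\<in>{1..d}. \<not> row_positive_except A d j m"
  shows "\<not> in_Pstar_n k d A (Suc n)"
proof
  assume "in_Pstar_n k d A (Suc n)"
  moreover have "(\<lambda>x\<in>level k (Suc n). skip m (last x)) \<in> level k (Suc n) \<rightarrow>\<^sub>E {1..d}"
  proof (rule restrict_PiE_iff[THEN iffD2], intro ballI)
    fix x assume "x \<in> level k (Suc n)"
    then have "x \<noteq> []" "set x \<subseteq> {1..k}"
      by (auto simp: level_def ktree_def)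
    then have "last x \<in> {1..k}"
      using last_in_set by blast
    then show "skip m (last x) \<in> {1..d}"
      using skip_range assms(2) by blast
  qed
  ultimately obtain lam where lam: "lam \<in> XA k d A"
    and lev: "restrict lam (level k (Suc n)) = (\<lambda>x\<in>level k (Suc n). skip m (last x))"
    by (rule in_Pstar_nD[OF _ assms(3)])
  define x where "x = replicate n (1::nat)"
  have x: "x \<in> ktree k"
    using assms(1) by (auto simp: x_def ktree_def)
  have "lam (x @ [g]) = skip m g" if "g \<in> {1..k}" for g
  proof -
    have "x @ [g] \<in> level k (Suc n)"
      using ktree_snoc[OF x that] by (simp add: level_def x_def)
    then show ?thesis
      using fun_cong[OF lev, of "x @ [g]"] by simp
  qed
  then have "row_positive_except A d (lam x) m"
    using row_positive_except_parent[OF assms(2) lam x assms(3)] by blast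
  moreover have "lam x \<in> {1..d}"
    using lam x by (auto simp: XA_def)
  ultimately show False
    using unrealised by blast
qed

definition complement_labelling :: "(nat \<Rightarrow> nat) \<Rightarrow> nat \<Rightarrow> nat list \<Rightarrow> nat" where
  "complement_labelling h r x = foldl (\<lambda>c g. skip (h c) g) r x"

lemma complement_labelling_snoc [simp]:
  "complement_labelling h r (x @ [g]) = skip (h (complement_labelling h r x)) g"
  by (simp add: complement_labelling_def)

lemma complement_labelling_range:
  assumes "r \<in> {1..k + 1}" "x \<in> ktree k"
  shows "complement_labelling h r x \<in> {1..k + 1}"
proof (cases x rule: rev_exhaust)
  case Nil
  then show ?thesis using assms(1) by (simp add: complement_labelling_def)
next
  case (snoc y g)
  then have "g \<in> {1..k}"
    using assms(2) by (auto simp: ktree_def)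
  then show ?thesis
    unfolding snoc complement_labelling_snoc by (rule skip_range)
qed

lemma complement_labelling_forces_root:
  assumes dk: "d = k + 1" and lam: "lam \<in> XA k d A" and "r \<in> {1..d}"
    and h: "\<forall>j\<in>{1..d}. h j \<in> {1..d}"
    and determined: "\<forall>j\<in>{1..d}. \<forall>j'\<in>{1..d}. row_positive_except A d j' (h j) \<longrightarrow> j' = j"
    and lev: "\<forall>x\<in>level k n. lam x = complement_labelling h r x"
  shows "lam [] = r"
proof -
  let ?mu = "complement_labelling h r"
  have "lam x = ?mu x" if "x \<in> ktree k" "length x + t = n" for x t
    using that
  proof (induction t arbitrary: x)
    case 0
    then show ?case using lev by (simp add: level_def)
  next
    case (Suc t)
    have mu_x: "?mu x \<in> {1..d}"
      using complement_labelling_range[of r k x h] Suc.prems(1) assms(3) dk by simp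
    have "lam (x @ [g]) = skip (h (?mu x)) g" if "g \<in> {1..k}" for g
      using Suc.IH[OF ktree_snoc[OF Suc.prems(1) that]] Suc.prems(2) by simp
    then have "row_positive_except A d (lam x) (h (?mu x))"
      using row_positive_except_parent[OF dk lam Suc.prems(1)] h mu_x by blast
    moreover have "lam x \<in> {1..d}"
      using lam Suc.prems(1) by (auto simp: XA_def)
    ultimately show ?case
      using determined mu_x by blast
  qed
  then show ?thesis
    by (simp add: ktree_def complement_labelling_def)
qed

lemma complement_selector:
  assumes zero: "\<forall>j\<in>{1..d}. \<exists>l\<in>{1..d}. A j l = 0"
    and realised: "\<forall>m\<in>{1..d}. \<exists>j\<in>{1..d}. row_positive_except A d j m"
  obtains h where "\<forall>j\<in>{1..d}. h j \<in> {1..d}"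
    and "\<forall>j\<in>{1..d}. \<forall>j'\<in>{1..d}. row_positive_except A d j' (h j) \<longrightarrow> j' = j"
proof -
  obtain tau where tau: "\<forall>m\<in>{1..d}. tau m \<in> {1..d} \<and> row_positive_except A d (tau m) m"
    using bchoice[of "{1..d}" "\<lambda>m j. j \<in> {1..d} \<and> row_positive_except A d j m"] realised
    by blast
  have "inj_on tau {1..d}"
    using tau row_positive_except_unique zero by (metis inj_onI)
  then have bij: "bij_betw tau {1..d} {1..d}"
    using tau endo_inj_surj[of "{1..d}" tau] by (simp add: bij_betw_def image_subset_iff)
  define h where "h = inv_into {1..d} tau"
  have "j' = j"
    if j: "j \<in> {1..d}" and j': "j' \<in> {1..d}" and pos: "row_positive_except A d j' (h j)" for j j'
  proof -
    obtain m where m: "m \<in> {1..d}" "j' = tau m"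
      using bij j' unfolding bij_betw_def by blast
    then have "m = h j"
      using row_positive_except_unique[of d A j' m "h j"] zero tau j' pos by auto
    then show "j' = j"
      using m bij_betw_inv_into_right[OF bij j] by (simp add: h_def)
  qed
  moreover have "\<forall>j\<in>{1..d}. h j \<in> {1..d}"
    using bij_betwE[OF bij_betw_inv_into[OF bij]] unfolding h_def by blast
  ultimately show thesis
    using that by blast
qed

lemma not_in_Pstar_n_if_complements_realised:
  assumes "k \<ge> 1" and dk: "d = k + 1"
    and zero: "\<forall>j\<in>{1..d}. \<exists>l\<in>{1..d}. A j l = 0"
    and realised: "\<forall>m\<in>{1..d}. \<exists>j\<in>{1..d}. row_positive_except A d j m"
  shows "\<not> in_Pstar_n k d A n"
proof
  assume P: "in_Pstar_n k d A n"
  obtain h where h: "\<forall>j\<in>{1..d}. h j \<in> {1..d}"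
    and determined: "\<forall>j\<in>{1..d}. \<forall>j'\<in>{1..d}. row_positive_except A d j' (h j) \<longrightarrow> j' = j"
    using complement_selector[OF zero realised] by blast
  have "(\<lambda>x\<in>level k n. complement_labelling h 1 x) \<in> level k n \<rightarrow>\<^sub>E {1..d}"
    using complement_labelling_range[of 1 k _ h] dk by (auto simp: level_def)
  moreover have "(2::nat) \<in> {1..d}"
    using assms(1) dk by simp
  ultimately obtain lam where lam: "lam \<in> XA k d A" "lam [] = 2"
    and lev: "restrict lam (level k n) = (\<lambda>x\<in>level k n. complement_labelling h 1 x)"
    using in_Pstar_nD[OF P] by metis
  have "\<forall>x\<in>level k n. lam x = complement_labelling h 1 x"
    using lev by (metis restrict_apply')
  then have "lam [] = 1"
    using complement_labelling_forces_root[OF dk lam(1) _ h determined] dk by simp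
  with lam(2) show False
    by simp
qed

lemma not_in_Pstar_n_if_no_positive_row:
  assumes "k \<ge> 1" "d = k + 1"
    and zero: "\<forall>j\<in>{1..d}. \<exists>l\<in>{1..d}. A j l = 0"
  shows "\<not> in_Pstar_n k d A n"
proof (cases "\<forall>m\<in>{1..d}. \<exists>j\<in>{1..d}. row_positive_except A d j m")
  case True
  then show ?thesis
    using not_in_Pstar_n_if_complements_realised[OF assms] by blast
next
  case False
  then obtain m where "m \<in> {1..d}" "\<forall>j\<in>{1..d}. \<not> row_positive_except A d j m"
    by blast
  then show ?thesis
    using not_in_Pstar_n_Suc_if_complement_unrealised[OF assms(1,2)] not_in_Pstar_n_0 assms(1,2)
    by (cases n) auto
qed

theorem proposition2p4:
  fixes k d :: nat and A :: "nat \<Rightarrow> nat \<Rightarrow> nat"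
  assumes "k \<ge> 1"
    and "d = k + 1"
    and "\<forall>i\<in>{1..d}. \<forall>j\<in>{1..d}. A i j \<in> {0, 1}"
    and "primitive d A"
  shows "in_Pstar k d A \<longleftrightarrow> (\<exists>i0\<in>{1..d}. \<forall>j\<in>{1..d}. A i0 j = 1)"
proof
  assume "in_Pstar k d A"
  then obtain n where "in_Pstar_n k d A n"
    unfolding in_Pstar_def by blast
  then have "\<not> (\<forall>j\<in>{1..d}. \<exists>l\<in>{1..d}. A j l = 0)"
    using not_in_Pstar_n_if_no_positive_row[OF assms(1,2)] by blast
  then show "\<exists>i0\<in>{1..d}. \<forall>j\<in>{1..d}. A i0 j = 1"
    using assms(3) by fastforce
next
  assume "\<exists>i0\<in>{1..d}. \<forall>j\<in>{1..d}. A i0 j = 1"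
  then obtain i0 where i0: "i0 \<in> {1..d}" "\<forall>j\<in>{1..d}. A i0 j > 0"
    by auto
  obtain p where "\<forall>i\<in>{1..d}. \<forall>j\<in>{1..d}. matpow d A p i j > 0"
    using assms(4) unfolding primitive_def by blast
  then have "in_Pstar_n k d A (Suc p)"
    using i0 primitive_successor[OF assms(4)] by (intro in_Pstar_n_Suc_if_positive_row) auto
  then show "in_Pstar k d A"
    unfolding in_Pstar_def by blast
qed

end
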